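(* Let $P,Q\subseteq\mathbb R^n$ be nonzero polyhedral cones. Consider the following cutting-plane iteration (run without stopping): choose $u^1\in P\cap S_n$ and $v^1\in\mathtt{Proj}_{Q\cap S_n}(u^1)$; for $k=1,2,\dots$, let $(u^{k+1},r^{k+1})$ be a global solution of $$\min_{(u,r)\in\mathbb R^{n+1}} r\quad\text{s.t.}\quad u\in P,\ \|u\|^2=1,\ \langle v^j,u\rangle\le r\ (j=1,\dots,k),$$ and let $v^{k+1}\in\mathtt{Proj}_{Q\cap S_n}(u^{k+1})$. Then every cluster point $\bar u$ of $\{u^k\}$ is a global solution of $\min_{u\in P\cap S_n}F_Q(u)$; for any $\bar v\in\mathtt{Proj}_{Q\cap S_n}(\bar u)$, the pair $(\bar u,\bar v)$ solves the max-min problem defining $\Theta(P,Q)$ (i.e. $\bar u$ attains the outer maximum, $\bar v$ attains the inner minimum for $\bar u$, and $\arccos\langle\bar u,\bar v\rangle=\Theta(P,Q)$); and $\lim_k r^k=\cos\Theta(P,Q)$.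
   Context: $S_n$ is the unit sphere of $\mathbb R^n$. A polyhedral cone is a finitely generated cone $\{Gx:x\ge0\}$. $\mathtt{Proj}_X(u):=\arg\min_{x\in X}\|x-u\|$. $F_Q(u):=\max_{v\in Q\cap S_n}\langle u,v\rangle$ and $\Theta(P,Q):=\max_{u\in P\cap S_n}\min_{v\in Q\cap S_n}\arccos\langle u,v\rangle$ (so $\cos\Theta(P,Q)=\min_{u\in P\cap S_n}F_Q(u)$). *)

theory Defs
  imports "HOL-Analysis.Analysis"
begin

text \<open>Polyhedral cone: finitely generated cone {G x : x >= 0}, i.e. the set of
  nonnegative combinations of finitely many generators (the columns of G).\<close>
definition polyhedral_cone :: "('a::real_vector) set \<Rightarrow> bool" where
  "polyhedral_cone P \<longleftrightarrow> (\<exists>G. finite G \<and>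
     P = {(\<Sum>g\<in>G. c g *\<^sub>R g) | c. \<forall>g\<in>G. c g \<ge> 0})"

definition proj_set :: "('a::real_normed_vector) set \<Rightarrow> 'a \<Rightarrow> 'a set" where
  "proj_set X u = {x \<in> X. \<forall>y\<in>X. norm (x - u) \<le> norm (y - u)}"

definition F_fun :: "('a::real_inner) set \<Rightarrow> 'a \<Rightarrow> real" where
  "F_fun Q u = (SUP v\<in>Q \<inter> sphere 0 1. inner u v)"

definition inner_angle :: "('a::real_inner) set \<Rightarrow> 'a \<Rightarrow> real" where
  "inner_angle Q u = (INF v\<in>Q \<inter> sphere 0 1. arccos (inner u v))"

definition Theta :: "('a::real_inner) set \<Rightarrow> 'a set \<Rightarrow> real" where
  "Theta P Q = (SUP u\<in>P \<inter> sphere 0 1. inner_angle Q u)"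

end

theory Submission
  imports Defs
begin

text \<open>
  The cut values \<open>r k\<close> increase and are bounded by \<open>min F\<^sub>Q\<close> on \<open>P \<inter> S\<^sub>n\<close>, since the
  cuts \<open>\<langle>v\<^sub>j, u\<rangle> \<le> F\<^sub>Q(u)\<close> are valid everywhere; so they converge to some \<open>L \<le> min F\<^sub>Q\<close>.
  Conversely, for \<open>j < k\<close> and unit \<open>y \<in> Q\<close> the projection property and the \<open>j\<close>-th cut
  give \<open>\<langle>u\<^sub>j, y\<rangle> \<le> \<langle>u\<^sub>j, v\<^sub>j\<rangle> \<le> r\<^sub>k + \<parallel>u\<^sub>j - u\<^sub>k\<parallel>\<close>; along a convergent subsequence the
  error term vanishes, so a cluster point \<open>u\<^sup>*\<close> satisfies \<open>F\<^sub>Q(u\<^sup>*) \<le> L\<close> and is a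
  minimiser. Since projecting a vector onto \<open>Q \<inter> S\<^sub>n\<close> maximises the inner product with it,
  \<open>F\<^sub>Q\<close> is attained at the projection and the inner minimum of the angle is
  \<open>arccos F\<^sub>Q\<close>; monotonicity of \<open>arccos\<close> then turns \<open>min F\<^sub>Q = L\<close> into \<open>\<Theta>(P,Q) = arccos L\<close>.
\<close>

lemma convex_cone_sum:
  "finite A \<Longrightarrow> convex_cone C \<Longrightarrow> (\<And>a. a \<in> A \<Longrightarrow> f a \<in> C) \<Longrightarrow> sum f A \<in> C"
  by (induction A rule: finite_induct) (auto simp: convex_cone_contains_0 convex_cone_add)

lemma nonneg_combinations_eq_convex_cone_hull:
  assumes "finite G"
  shows "{(\<Sum>g\<in>G. c g *\<^sub>R g) | c. \<forall>g\<in>G. c g \<ge> 0} = convex_cone hull G"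
    (is "?C = _")
proof
  show "?C \<subseteq> convex_cone hull G"
    by (auto intro!: convex_cone_sum[OF assms convex_cone_convex_cone_hull]
        simp: convex_cone_hull_mul hull_inc)
  show "convex_cone hull G \<subseteq> ?C"
  proof (rule hull_minimal)
    show "G \<subseteq> ?C"
    proof
      fix h assume "h \<in> G"
      then have "h = (\<Sum>g\<in>G. (if g = h then 1 else 0) *\<^sub>R g)"
        using assms by (simp add: if_distrib[where f = "\<lambda>a. a *\<^sub>R _"] sum.delta cong: if_cong)
      then show "h \<in> ?C"
        by (intro CollectI exI[of _ "\<lambda>g. if g = h then 1 else 0"]) auto
    qed
    show "convex_cone ?C"
      unfolding convex_cone_iff
    proof (intro conjI ballI allI impI)
      show "0 \<in> ?C"
        by (intro CollectI exI[of _ "\<lambda>g. 0"]) auto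
    next
      fix x y assume "x \<in> ?C" "y \<in> ?C"
      then obtain c d where "x = (\<Sum>g\<in>G. c g *\<^sub>R g)" "\<forall>g\<in>G. c g \<ge> 0"
        and "y = (\<Sum>g\<in>G. d g *\<^sub>R g)" "\<forall>g\<in>G. d g \<ge> 0"
        by blast
      then show "x + y \<in> ?C"
        by (intro CollectI exI[of _ "\<lambda>g. c g + d g"]) (auto simp: scaleR_add_left sum.distrib)
    next
      fix x and a :: real assume "x \<in> ?C" "0 \<le> a"
      then obtain c where "x = (\<Sum>g\<in>G. c g *\<^sub>R g)" "\<forall>g\<in>G. c g \<ge> 0"
        by blast
      then show "a *\<^sub>R x \<in> ?C"
        using \<open>0 \<le> a\<close> by (intro CollectI exI[of _ "\<lambda>g. a * c g"]) (auto simp: scaleR_right.sum)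
    qed
  qed
qed

lemma closed_polyhedral_cone:
  fixes P :: "'a::euclidean_space set"
  assumes "polyhedral_cone P"
  shows "closed P"
proof -
  obtain G where "finite G" "P = {(\<Sum>g\<in>G. c g *\<^sub>R g) | c. \<forall>g\<in>G. c g \<ge> 0}"
    using assms unfolding polyhedral_cone_def by blast
  then show ?thesis
    by (simp add: nonneg_combinations_eq_convex_cone_hull closed_convex_cone_hull)
qed

lemma proj_set_nonempty:
  fixes X :: "'a::real_normed_vector set"
  assumes "compact X" "X \<noteq> {}"
  shows "proj_set X u \<noteq> {}"
proof -
  have "continuous_on X (\<lambda>x. norm (x - u))"
    by (intro continuous_intros)
  then show ?thesis
    using continuous_attains_inf[OF assms] unfolding proj_set_def by blast
qed

lemma proj_set_sphere_nonempty:
  fixes Q :: "'a::euclidean_space set"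
  assumes "closed Q" "Q \<inter> sphere 0 1 \<noteq> {}"
  shows "proj_set (Q \<inter> sphere 0 1) u \<noteq> {}"
  using assms by (intro proj_set_nonempty) auto

text \<open>On the unit sphere \<open>\<parallel>z - u\<parallel>\<^sup>2 = 1 - 2\<langle>u, z\<rangle> + \<parallel>u\<parallel>\<^sup>2\<close>, so nearest points maximise \<open>\<langle>u, z\<rangle>\<close>.\<close>

lemma proj_set_sphere_inner_ge:
  fixes X :: "'a::real_inner set"
  assumes x: "x \<in> proj_set (X \<inter> sphere 0 1) u" and y: "y \<in> X \<inter> sphere 0 1"
  shows "inner u y \<le> inner u x"
proof -
  have dist_sq: "(norm (z - u))\<^sup>2 = 1 - 2 * inner u z + (norm u)\<^sup>2" if "norm z = 1" for z
    using that by (simp add: norm_eq_1 power2_norm_eq_inner inner_diff_left inner_diff_right inner_commute)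
  have "norm (x - u) \<le> norm (y - u)"
    using x y unfolding proj_set_def by blast
  then have "(norm (x - u))\<^sup>2 \<le> (norm (y - u))\<^sup>2"
    by (simp add: power_mono)
  moreover have "norm x = 1" "norm y = 1"
    using x y unfolding proj_set_def by auto
  ultimately show ?thesis
    using dist_sq[of x] dist_sq[of y] by linarith
qed

lemma F_fun_eq_inner_proj:
  fixes Q :: "'a::real_inner set"
  assumes "x \<in> proj_set (Q \<inter> sphere 0 1) u"
  shows "F_fun Q u = inner u x"
  unfolding F_fun_def
  using assms proj_set_sphere_inner_ge[OF assms]
  by (intro cSup_eq_maximum) (auto simp: proj_set_def)

lemma abs_inner_unit_le_1:
  fixes a b :: "'a::real_inner"
  assumes "norm a = 1" "norm b = 1"
  shows "\<bar>inner a b\<bar> \<le> 1"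
  using Cauchy_Schwarz_ineq2[of a b] assms by simp

lemma inner_angle_eq_arccos_inner_proj:
  fixes Q :: "'a::real_inner set"
  assumes u: "norm u = 1" and x: "x \<in> proj_set (Q \<inter> sphere 0 1) u"
  shows "inner_angle Q u = arccos (inner u x)"
  unfolding inner_angle_def
proof (rule cInf_eq_minimum)
  have x_sphere: "x \<in> Q \<inter> sphere 0 1"
    using x unfolding proj_set_def by blast
  then show "arccos (inner u x) \<in> (\<lambda>v. arccos (inner u v)) ` (Q \<inter> sphere 0 1)"
    by blast
  fix a assume "a \<in> (\<lambda>v. arccos (inner u v)) ` (Q \<inter> sphere 0 1)"
  then obtain y where y: "y \<in> Q \<inter> sphere 0 1" and a: "a = arccos (inner u y)"
    by blast
  show "arccos (inner u x) \<le> a"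
    unfolding a using abs_inner_unit_le_1[of u x] abs_inner_unit_le_1[of u y] u x_sphere y
    by (intro arccos_le_arccos proj_set_sphere_inner_ge[OF x y]) auto
qed

lemma
  fixes Q :: "'a::euclidean_space set"
  assumes "closed Q" "Q \<inter> sphere 0 1 \<noteq> {}" "norm u = 1"
  shows abs_F_fun_le_1: "\<bar>F_fun Q u\<bar> \<le> 1"
    and inner_angle_eq_arccos_F_fun: "inner_angle Q u = arccos (F_fun Q u)"
proof -
  obtain x where x: "x \<in> proj_set (Q \<inter> sphere 0 1) u"
    using proj_set_sphere_nonempty[OF assms(1,2)] by blast
  then have "norm x = 1"
    unfolding proj_set_def by simp
  then show "\<bar>F_fun Q u\<bar> \<le> 1"
    using F_fun_eq_inner_proj[OF x] abs_inner_unit_le_1 assms(3) by simp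
  show "inner_angle Q u = arccos (F_fun Q u)"
    using F_fun_eq_inner_proj[OF x] inner_angle_eq_arccos_inner_proj[OF assms(3) x] by simp
qed

lemma Theta_eq_arccos_min_F_fun:
  fixes P Q :: "'a::euclidean_space set"
  assumes Q: "closed Q" "Q \<inter> sphere 0 1 \<noteq> {}"
    and ub: "ub \<in> P \<inter> sphere 0 1"
    and min: "\<forall>w\<in>P \<inter> sphere 0 1. F_fun Q ub \<le> F_fun Q w"
  shows "Theta P Q = arccos (F_fun Q ub)"
  unfolding Theta_def
proof (rule cSup_eq_maximum)
  show "arccos (F_fun Q ub) \<in> inner_angle Q ` (P \<inter> sphere 0 1)"
    using ub inner_angle_eq_arccos_F_fun[OF Q] by force
  fix a assume "a \<in> inner_angle Q ` (P \<inter> sphere 0 1)"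
  then obtain w where w: "w \<in> P \<inter> sphere 0 1" and a: "a = inner_angle Q w"
    by blast
  show "a \<le> arccos (F_fun Q ub)"
    unfolding a using w ub min abs_F_fun_le_1[OF Q, of w] abs_F_fun_le_1[OF Q, of ub]
    by (auto simp: inner_angle_eq_arccos_F_fun[OF Q] abs_le_iff intro!: arccos_le_arccos)
qed

locale cutting_plane_iteration =
  fixes P Q :: "'a::euclidean_space set"
    and u v :: "nat \<Rightarrow> 'a"
    and r :: "nat \<Rightarrow> real"
  assumes closed_P: "closed P"
    and closed_Q: "closed Q"
    and u1: "u 1 \<in> P \<inter> sphere 0 1"
    and v_proj: "\<And>k. k \<ge> 1 \<Longrightarrow> v k \<in> proj_set (Q \<inter> sphere 0 1) (u k)"
    and feas: "\<And>k. k \<ge> 1 \<Longrightarrow>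
        u (Suc k) \<in> P \<and> (norm (u (Suc k)))\<^sup>2 = 1 \<and>
        (\<forall>j\<in>{1..k}. inner (v j) (u (Suc k)) \<le> r (Suc k))"
    and opt: "\<And>k w s. k \<ge> 1 \<Longrightarrow> w \<in> P \<Longrightarrow> (norm w)\<^sup>2 = 1 \<Longrightarrow>
        (\<forall>j\<in>{1..k}. inner (v j) w \<le> s) \<Longrightarrow> r (Suc k) \<le> s"
begin

lemma u_in_sphere:
  assumes "k \<ge> 1"
  shows "u k \<in> P \<inter> sphere 0 1"
proof (cases "k = 1")
  case False
  with assms have "k - 1 \<ge> 1" "Suc (k - 1) = k"
    by auto
  then show ?thesis
    using feas[of "k - 1"] norm_ge_zero[of "u k"] by (auto simp: power2_eq_1_iff)
qed (use u1 in simp)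

lemma v_in_sphere: "k \<ge> 1 \<Longrightarrow> v k \<in> Q \<inter> sphere 0 1"
  using v_proj unfolding proj_set_def by blast

lemma Q_sphere_nonempty: "Q \<inter> sphere 0 1 \<noteq> {}"
  using v_in_sphere[of 1] by blast

lemma r_Suc_le_r_Suc_Suc: "k \<ge> 1 \<Longrightarrow> r (Suc k) \<le> r (Suc (Suc k))"
  using opt[of k "u (Suc (Suc k))" "r (Suc (Suc k))"] feas[of "Suc k"] by auto

lemma r_le_F_fun:
  assumes "k \<ge> 1" "w \<in> P \<inter> sphere 0 1"
  shows "r (Suc k) \<le> F_fun Q w"
proof (rule opt[OF assms(1)])
  show "w \<in> P" "(norm w)\<^sup>2 = 1"
    using assms(2) by auto
  obtain x where x: "x \<in> proj_set (Q \<inter> sphere 0 1) w"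
    using proj_set_sphere_nonempty[OF closed_Q Q_sphere_nonempty] by blast
  show "\<forall>j\<in>{1..k}. inner (v j) w \<le> F_fun Q w"
    using proj_set_sphere_inner_ge[OF x v_in_sphere]
    by (simp add: F_fun_eq_inner_proj[OF x] inner_commute)
qed

text \<open>Only \<open>r k\<close> for \<open>k \<ge> 2\<close> is constrained by the iteration; \<open>r 0\<close> and \<open>r 1\<close> are arbitrary.\<close>

lemma incseq_r_shift: "incseq (\<lambda>n. r (n + 2))"
  by (rule incseq_SucI) (use r_Suc_le_r_Suc_Suc in simp)

lemma convergent_r: "convergent r"
proof -
  have "\<forall>n. r (n + 2) \<le> F_fun Q (u 1)"
    using r_le_F_fun[of _ "u 1"] u1 by simp
  then obtain L where "(\<lambda>n. r (n + 2)) \<longlonglongrightarrow> L"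
    using incseq_convergent[OF incseq_r_shift] by blast
  then have "r \<longlonglongrightarrow> L"
    by (rule LIMSEQ_offset)
  then show ?thesis
    unfolding convergent_def ..
qed

lemma r_le_lim:
  assumes "k \<ge> 2"
  shows "r k \<le> lim r"
proof -
  obtain m where k: "k = m + 2"
    using assms by (metis add.commute le_add_diff_inverse)
  have "(\<lambda>n. r (n + 2)) \<longlonglongrightarrow> lim r"
    using convergent_r LIMSEQ_ignore_initial_segment[of r "lim r" 2]
    by (simp add: convergent_LIMSEQ_iff)
  then show ?thesis
    unfolding k by (rule incseq_le[OF incseq_r_shift])
qed

lemma lim_le_F_fun:
  assumes "w \<in> P \<inter> sphere 0 1"
  shows "lim r \<le> F_fun Q w"
proof (rule LIMSEQ_le_const2)
  show "r \<longlonglongrightarrow> lim r"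
    using convergent_r by (simp add: convergent_LIMSEQ_iff)
  have "r n \<le> F_fun Q w" if "n \<ge> 2" for n
    using that r_le_F_fun[OF _ assms] by (cases n) auto
  then show "\<exists>N. \<forall>n\<ge>N. r n \<le> F_fun Q w"
    by blast
qed

lemma inner_le_r_plus_dist:
  assumes "1 \<le> j" "j < k" "y \<in> Q \<inter> sphere 0 1"
  shows "inner (u j) y \<le> r k + norm (u j - u k)"
proof -
  have "norm (v j) = 1"
    using v_in_sphere[OF assms(1)] by simp
  have "inner (u j) y \<le> inner (u j) (v j)"
    using proj_set_sphere_inner_ge[OF v_proj[OF assms(1)] assms(3)] .
  also have "\<dots> = inner (u k) (v j) + inner (u j - u k) (v j)"
    by (simp add: inner_diff_left)
  also have "inner (u k) (v j) \<le> r k"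
    using feas[of "k - 1"] assms by (auto simp: inner_commute)
  also have "inner (u j - u k) (v j) \<le> norm (u j - u k)"
    using norm_cauchy_schwarz[of "u j - u k" "v j"] \<open>norm (v j) = 1\<close> by simp
  finally show ?thesis
    by simp
qed

lemma
  assumes "strict_mono \<sigma>" "(u \<circ> \<sigma>) \<longlonglongrightarrow> ub"
  shows cluster_point_in_sphere: "ub \<in> P \<inter> sphere 0 1"
    and F_fun_cluster_point_le_lim: "F_fun Q ub \<le> lim r"
proof -
  have \<sigma>_ge: "n \<le> \<sigma> n" "\<sigma> n < \<sigma> (Suc n)" for n
    using seq_suble[OF assms(1)] assms(1) by (auto simp: strict_mono_Suc_iff)
  show "ub \<in> P \<inter> sphere 0 1"
  proof (rule Lim_in_closed_set[OF _ _ _ assms(2)])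
    show "closed (P \<inter> sphere 0 1)"
      using closed_P by (simp add: closed_Int)
    show "\<forall>\<^sub>F n in sequentially. (u \<circ> \<sigma>) n \<in> P \<inter> sphere 0 1"
      using u_in_sphere order.trans[OF _ \<sigma>_ge(1)]
      by (auto simp: eventually_sequentially intro!: exI[of _ 1])
  qed simp
  obtain x where x: "x \<in> proj_set (Q \<inter> sphere 0 1) ub"
    using proj_set_sphere_nonempty[OF closed_Q Q_sphere_nonempty] by blast
  then have x_sphere: "x \<in> Q \<inter> sphere 0 1"
    unfolding proj_set_def by blast
  have "(\<lambda>n. u (\<sigma> (Suc n))) \<longlonglongrightarrow> ub"
    using assms(2) LIMSEQ_Suc[of "u \<circ> \<sigma>"] by (simp add: comp_def)
  then have "(\<lambda>n. lim r + norm (u (\<sigma> n) - u (\<sigma> (Suc n)))) \<longlonglongrightarrow> lim r + norm (ub - ub)"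
    using assms(2) by (intro tendsto_intros) (simp_all add: comp_def)
  moreover have "(\<lambda>n. inner (u (\<sigma> n)) x) \<longlonglongrightarrow> inner ub x"
    using assms(2) by (intro tendsto_intros) (simp add: comp_def)
  moreover have "\<forall>\<^sub>F n in sequentially. inner (u (\<sigma> n)) x \<le> lim r + norm (u (\<sigma> n) - u (\<sigma> (Suc n)))"
  proof (rule eventually_sequentiallyI[of 1])
    fix n :: nat assume "1 \<le> n"
    then have "1 \<le> \<sigma> n" "2 \<le> \<sigma> (Suc n)"
      using \<sigma>_ge[of n] by linarith+
    then show "inner (u (\<sigma> n)) x \<le> lim r + norm (u (\<sigma> n) - u (\<sigma> (Suc n)))"
      using inner_le_r_plus_dist[OF _ \<sigma>_ge(2) x_sphere] r_le_lim by fastforce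
  qed
  ultimately have "inner ub x \<le> lim r + norm (ub - ub)"
    by (rule tendsto_le[OF trivial_limit_sequentially])
  then show "F_fun Q ub \<le> lim r"
    by (simp add: F_fun_eq_inner_proj[OF x])
qed

lemma cluster_point_exists: "\<exists>ub \<sigma>. strict_mono \<sigma> \<and> (u \<circ> \<sigma>) \<longlonglongrightarrow> ub"
proof -
  have "\<forall>n. u (Suc n) \<in> sphere 0 1"
    using u_in_sphere by simp
  then obtain ub \<rho> where "strict_mono \<rho>" "((\<lambda>n. u (Suc n)) \<circ> \<rho>) \<longlonglongrightarrow> ub"
    using seq_compactE[OF compact_imp_seq_compact[OF compact_sphere]] by metis
  moreover have "strict_mono (Suc \<circ> \<rho>)"
    using \<open>strict_mono \<rho>\<close> by (simp add: strict_mono_def)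
  moreover have "u \<circ> (Suc \<circ> \<rho>) = (\<lambda>n. u (Suc n)) \<circ> \<rho>"
    by (simp add: comp_def)
  ultimately have "strict_mono (Suc \<circ> \<rho>) \<and> (u \<circ> (Suc \<circ> \<rho>)) \<longlonglongrightarrow> ub"
    by simp
  then show ?thesis
    by blast
qed

lemma cluster_point_minimises_F_fun:
  assumes "strict_mono \<sigma>" "(u \<circ> \<sigma>) \<longlonglongrightarrow> ub"
  shows "F_fun Q ub = lim r" "\<forall>w\<in>P \<inter> sphere 0 1. F_fun Q ub \<le> F_fun Q w"
proof -
  show F_eq: "F_fun Q ub = lim r"
    using F_fun_cluster_point_le_lim[OF assms] lim_le_F_fun[OF cluster_point_in_sphere[OF assms]]
    by (rule antisym)
  show "\<forall>w\<in>P \<inter> sphere 0 1. F_fun Q ub \<le> F_fun Q w"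
    unfolding F_eq using lim_le_F_fun by blast
qed

lemma inner_angle_cluster_point_eq_Theta:
  assumes "strict_mono \<sigma>" "(u \<circ> \<sigma>) \<longlonglongrightarrow> ub"
  shows "inner_angle Q ub = Theta P Q"
  using Theta_eq_arccos_min_F_fun[OF closed_Q Q_sphere_nonempty cluster_point_in_sphere[OF assms]
      cluster_point_minimises_F_fun(2)[OF assms]]
    inner_angle_eq_arccos_F_fun[OF closed_Q Q_sphere_nonempty] cluster_point_in_sphere[OF assms]
  by simp

lemma r_tendsto_cos_Theta: "r \<longlonglongrightarrow> cos (Theta P Q)"
proof -
  obtain ub \<sigma> where ub: "strict_mono \<sigma>" "(u \<circ> \<sigma>) \<longlonglongrightarrow> ub"
    using cluster_point_exists by blast
  have ub_sphere: "norm ub = 1"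
    using cluster_point_in_sphere[OF ub] by simp
  have "Theta P Q = arccos (lim r)"
    using inner_angle_cluster_point_eq_Theta[OF ub] cluster_point_minimises_F_fun(1)[OF ub]
      inner_angle_eq_arccos_F_fun[OF closed_Q Q_sphere_nonempty ub_sphere] by simp
  moreover have "\<bar>lim r\<bar> \<le> 1"
    using abs_F_fun_le_1[OF closed_Q Q_sphere_nonempty ub_sphere] cluster_point_minimises_F_fun(1)[OF ub]
    by simp
  ultimately show ?thesis
    using convergent_r by (simp add: cos_arccos_abs convergent_LIMSEQ_iff)
qed

end

theorem mainTheorem11:
  fixes P Q :: "(real ^ 'n) set"
    and u v :: "nat \<Rightarrow> real ^ 'n"
    and r :: "nat \<Rightarrow> real"
  assumes P: "polyhedral_cone P" "P \<noteq> {0}"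
    and Q: "polyhedral_cone Q" "Q \<noteq> {0}"
    and u1: "u 1 \<in> P \<inter> sphere 0 1"
    and v_proj: "\<And>k. k \<ge> 1 \<Longrightarrow> v k \<in> proj_set (Q \<inter> sphere 0 1) (u k)"
    and feas: "\<And>k. k \<ge> 1 \<Longrightarrow>
        u (Suc k) \<in> P \<and> (norm (u (Suc k)))\<^sup>2 = 1 \<and>
        (\<forall>j\<in>{1..k}. inner (v j) (u (Suc k)) \<le> r (Suc k))"
    and opt: "\<And>k w s. k \<ge> 1 \<Longrightarrow> w \<in> P \<Longrightarrow> (norm w)\<^sup>2 = 1 \<Longrightarrow>
        (\<forall>j\<in>{1..k}. inner (v j) w \<le> s) \<Longrightarrow> r (Suc k) \<le> s"
  shows "(\<forall>ubar. (\<exists>\<sigma>. strict_mono \<sigma> \<and> (u \<circ> \<sigma>) \<longlonglongrightarrow> ubar) \<longrightarrow>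
            (ubar \<in> P \<inter> sphere 0 1 \<and>
             (\<forall>w\<in>P \<inter> sphere 0 1. F_fun Q ubar \<le> F_fun Q w) \<and>
             (\<forall>vbar\<in>proj_set (Q \<inter> sphere 0 1) ubar.
                inner_angle Q ubar = Theta P Q \<and>
                arccos (inner ubar vbar) = inner_angle Q ubar \<and>
                arccos (inner ubar vbar) = Theta P Q)))
         \<and> r \<longlonglongrightarrow> cos (Theta P Q)"
proof -
  interpret cutting_plane_iteration P Q u v r
    by (rule cutting_plane_iteration.intro)
      (fact closed_polyhedral_cone[OF P(1)] closed_polyhedral_cone[OF Q(1)] u1 v_proj feas opt)+
  have "ubar \<in> P \<inter> sphere 0 1 \<and> (\<forall>w\<in>P \<inter> sphere 0 1. F_fun Q ubar \<le> F_fun Q w) \<and>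
      (\<forall>vbar\<in>proj_set (Q \<inter> sphere 0 1) ubar.
         inner_angle Q ubar = Theta P Q \<and> arccos (inner ubar vbar) = inner_angle Q ubar)"
    if "strict_mono \<sigma>" "(u \<circ> \<sigma>) \<longlonglongrightarrow> ubar" for \<sigma> ubar
  proof -
    note ubar_sphere = cluster_point_in_sphere[OF that]
    have "arccos (inner ubar vbar) = inner_angle Q ubar"
      if "vbar \<in> proj_set (Q \<inter> sphere 0 1) ubar" for vbar
      using inner_angle_eq_arccos_inner_proj[OF _ that] ubar_sphere by simp
    then show ?thesis
      using ubar_sphere cluster_point_minimises_F_fun(2)[OF that]
        inner_angle_cluster_point_eq_Theta[OF that] by simp
  qed
  then show ?thesis
    using r_tendsto_cos_Theta by metis
qed

end
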